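(* Let $T$ be a commutative ring with identity, $S$ a unital subring and $I$ a nil ideal of $T$ with $T=S+I$ and $S\cap I=\{0\}$. Then $T$ is roughly complemented if and only if for each $s\in S$ and $i\in I$ there are $t\in S$ and $j\in I$ such that $st=0$, $s+t\in\mathrm{areg}(S)$, and $(s+i)j=it$. In particular, if $T$ is roughly complemented, then $S$ is roughly complemented.
   Context: For a ring $A$: $\mathfrak{N}(A)$ is the nilradical, $\mathrm{reg}(A)$ the regular elements, $\mathrm{areg}(A)=\{x: x+\mathfrak{N}(A)\in\mathrm{reg}(A/\mathfrak{N}(A))\}$. An element $a\in A$ is roughly complemented if there is $b\in A$ with $ab=0$ and $a+b\in\mathrm{areg}(A)$; $A$ is roughly complemented if every element is. *)

theory Defs
  imports Main
begin

text \<open>Rings are subrings A (given by their carrier set) of an ambient commutative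
ring, the type 'a :: comm_ring_1.  The whole ring T is UNIV.\<close>

definition is_subring :: "'a::comm_ring_1 set \<Rightarrow> bool" where
  "is_subring A \<longleftrightarrow> 1 \<in> A \<and> (\<forall>x\<in>A. \<forall>y\<in>A. x + y \<in> A \<and> x - y \<in> A \<and> x * y \<in> A)"

definition is_ideal :: "'a::comm_ring_1 set \<Rightarrow> bool" where
  "is_ideal I \<longleftrightarrow> 0 \<in> I \<and> (\<forall>x\<in>I. \<forall>y\<in>I. x + y \<in> I) \<and> (\<forall>x\<in>I. - x \<in> I)
     \<and> (\<forall>r. \<forall>x\<in>I. r * x \<in> I)"

definition is_nil :: "'a::comm_ring_1 set \<Rightarrow> bool" where
  "is_nil I \<longleftrightarrow> (\<forall>x\<in>I. \<exists>n::nat. x ^ n = 0)"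

definition nilradical :: "'a::comm_ring_1 set \<Rightarrow> 'a set" where
  "nilradical A = {x \<in> A. \<exists>n::nat. x ^ n = 0}"

text \<open>areg(A): x + N(A) is a regular element (non-zero-divisor) of A/N(A).\<close>
definition areg :: "'a::comm_ring_1 set \<Rightarrow> 'a set" where
  "areg A = {x \<in> A. \<forall>y\<in>A. x * y \<in> nilradical A \<longrightarrow> y \<in> nilradical A}"

definition roughly_complemented :: "'a::comm_ring_1 set \<Rightarrow> bool" where
  "roughly_complemented A \<longleftrightarrow> (\<forall>a\<in>A. \<exists>b\<in>A. a * b = 0 \<and> a + b \<in> areg A)"

end

theory Submission
  imports Defs
begin

text \<open>Every x splits uniquely as s + i with s \<in> S and i \<in> I. As I is nil, x is
  nilpotent iff its S-component is, hence s + i \<in> areg(T) iff s \<in> areg(S).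
  Writing a complement of s + i as t - j and comparing components of
  (s + i) * (t - j) = s * t + (i * t - (s + i) * j) = 0 gives s * t = 0 in S and
  (s + i) * j = i * t in I. Taking i = 0 gives the statement for S.\<close>

lemma nilradical_UNIV_iff: "x \<in> nilradical UNIV \<longleftrightarrow> (\<exists>n. x ^ n = 0)"
  by (simp add: nilradical_def)

lemma nilradical_eq_Int_nilradical_UNIV: "nilradical A = A \<inter> nilradical UNIV"
  by (auto simp: nilradical_def)

lemma nilpotent_add_power_eq_0:
  fixes a b :: "'a::comm_ring_1"
  assumes a: "a ^ m = 0" and b: "b ^ n = 0"
  shows "(a + b) ^ (m + n) = 0"
proof -
  have "a ^ k * b ^ (m + n - k) = 0" for k
  proof (cases "m \<le> k")
    case True
    then have "a ^ k = a ^ m * a ^ (k - m)" by (simp flip: power_add)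
    then show ?thesis using a by simp
  next
    case False
    then have "m + n - k = n + (m - k)" by simp
    then have "b ^ (m + n - k) = b ^ n * b ^ (m - k)" by (simp add: power_add)
    then show ?thesis using b by simp
  qed
  then show ?thesis by (simp add: binomial_ring mult.assoc)
qed

lemma is_ideal_mult_closed:
  assumes "is_ideal J" "i \<in> J"
  shows "- i \<in> J" "x * i \<in> J" "i * x \<in> J"
proof -
  show "- i \<in> J" "x * i \<in> J" using assms by (auto simp: is_ideal_def)
  then show "i * x \<in> J" by (simp add: mult.commute)
qed

lemma is_ideal_add_closed:
  assumes "is_ideal J" "i \<in> J" "j \<in> J"
  shows "i + j \<in> J" "i - j \<in> J"
proof -
  have "- j \<in> J" using assms(1,3) by (rule is_ideal_mult_closed)
  then have "i + j \<in> J \<and> i + - j \<in> J" using assms unfolding is_ideal_def by blast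
  then show "i + j \<in> J" "i - j \<in> J" by simp_all
qed

lemma is_ideal_nilradical_UNIV: "is_ideal (nilradical (UNIV :: 'a::comm_ring_1 set))"
proof -
  have add: "\<exists>k. (x + y) ^ k = 0" if "x ^ m = 0" "y ^ n = 0" for x y :: 'a and m n
    using nilpotent_add_power_eq_0[OF that] by blast
  have scale: "\<exists>k. (- x) ^ k = 0" "\<exists>k. (r * x) ^ k = 0" if "x ^ n = 0" for r x :: 'a and n
  proof -
    have "(- x) ^ n = (- 1) ^ n * x ^ n" by (rule power_minus)
    then show "\<exists>k. (- x) ^ k = 0" using that by auto
    have "(r * x) ^ n = r ^ n * x ^ n" by (rule power_mult_distrib)
    then show "\<exists>k. (r * x) ^ k = 0" using that by auto
  qed
  have "\<exists>k. (0::'a) ^ k = 0" using power_0_Suc by blast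
  with add scale show ?thesis
    unfolding is_ideal_def nilradical_UNIV_iff Ball_def by blast
qed

locale nil_split =
  fixes S I :: "'a::comm_ring_1 set"
  assumes subring: "is_subring S"
    and ideal: "is_ideal I"
    and nil: "is_nil I"
    and decompose: "\<forall>x. \<exists>s\<in>S. \<exists>i\<in>I. x = s + i"
    and disjoint: "S \<inter> I = {0}"
begin

lemma S_closed:
  assumes "s \<in> S" "t \<in> S"
  shows "s + t \<in> S" "s * t \<in> S"
  using subring assms by (auto simp: is_subring_def)

lemmas I_mult_closed = is_ideal_mult_closed[OF ideal]
lemmas I_add_closed = is_ideal_add_closed[OF ideal]

lemma I_subset_nilradical: "I \<subseteq> nilradical UNIV"
  using nil by (auto simp: is_nil_def nilradical_UNIV_iff)

lemma all_split_iff: "(\<forall>x. P x) \<longleftrightarrow> (\<forall>s\<in>S. \<forall>i\<in>I. P (s + i))"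
proof
  assume split: "\<forall>s\<in>S. \<forall>i\<in>I. P (s + i)"
  show "\<forall>x. P x"
  proof
    fix x
    obtain s i where "s \<in> S" "i \<in> I" "x = s + i" using decompose by blast
    with split show "P x" by blast
  qed
qed blast

lemma split_eq_0:
  assumes "s \<in> S" "i \<in> I" "s + i = 0"
  shows "s = 0" "i = 0"
proof -
  have "s = - i" using assms(3) by (simp add: eq_neg_iff_add_eq_0)
  then have "s \<in> S \<inter> I" using assms I_mult_closed(1) by auto
  then show "s = 0" using disjoint by auto
  then show "i = 0" using assms(3) by simp
qed

lemma add_nil_in_nilradical_iff:
  assumes "i \<in> I"
  shows "x + i \<in> nilradical UNIV \<longleftrightarrow> x \<in> nilradical UNIV"
proof -
  note N_closed = is_ideal_add_closed[OF is_ideal_nilradical_UNIV]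
  have i: "i \<in> nilradical UNIV" using assms I_subset_nilradical by blast
  show ?thesis
  proof
    assume "x + i \<in> nilradical UNIV"
    from N_closed(2)[OF this i] show "x \<in> nilradical UNIV" by simp
  qed (rule N_closed(1)[OF _ i])
qed

lemma areg_UNIV_split_iff:
  assumes s: "s \<in> S" and i: "i \<in> I"
  shows "s + i \<in> areg UNIV \<longleftrightarrow> s \<in> areg S"
proof -
  have mult_nil_iff: "(s + i) * (s' + i') \<in> nilradical UNIV \<longleftrightarrow> s * s' \<in> nilradical UNIV"
    if "i' \<in> I" for s' i'
  proof -
    have "(s + i) * (s' + i') = s * s' + (s * i' + i * (s' + i'))"
      by (simp add: algebra_simps)
    moreover have "s * i' + i * (s' + i') \<in> I"
      using that i I_mult_closed I_add_closed by blast
    ultimately show ?thesis by (simp add: add_nil_in_nilradical_iff)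
  qed
  show ?thesis
  proof
    assume reg: "s + i \<in> areg UNIV"
    have "y \<in> nilradical UNIV" if "s * y \<in> nilradical UNIV" for y
    proof -
      have "0 \<in> I" using ideal by (simp add: is_ideal_def)
      with that have "(s + i) * (y + 0) \<in> nilradical UNIV" using mult_nil_iff by blast
      with reg show ?thesis by (simp add: areg_def)
    qed
    then show "s \<in> areg S"
      using s by (auto simp: areg_def nilradical_eq_Int_nilradical_UNIV[of S])
  next
    assume reg: "s \<in> areg S"
    have "y \<in> nilradical UNIV" if "(s + i) * y \<in> nilradical UNIV" for y
    proof -
      obtain s' i' where s': "s' \<in> S" and i': "i' \<in> I" and y: "y = s' + i'"
        using decompose by blast
      have "s * s' \<in> nilradical UNIV" using that mult_nil_iff[OF i'] y by simp
      then have "s' \<in> nilradical UNIV"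
        using reg s s' S_closed(2) by (auto simp: areg_def nilradical_eq_Int_nilradical_UNIV[of S])
      then show ?thesis using y i' by (simp add: add_nil_in_nilradical_iff)
    qed
    then show "s + i \<in> areg UNIV" by (simp add: areg_def)
  qed
qed

lemma complement_split_iff:
  assumes s: "s \<in> S" and i: "i \<in> I"
  shows "(\<exists>b. (s + i) * b = 0 \<and> (s + i) + b \<in> areg UNIV) \<longleftrightarrow>
         (\<exists>t\<in>S. \<exists>j\<in>I. s * t = 0 \<and> s + t \<in> areg S \<and> (s + i) * j = i * t)"
proof
  assume "\<exists>b. (s + i) * b = 0 \<and> (s + i) + b \<in> areg UNIV"
  then obtain b where b0: "(s + i) * b = 0" and b_reg: "(s + i) + b \<in> areg UNIV" by blast
  obtain t j where t: "t \<in> S" and j: "j \<in> I" and b: "b = t + j"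
    using decompose by blast
  have "s * t + ((s + i) * j + i * t) = 0"
    using b0 b by (simp add: algebra_simps)
  moreover have "(s + i) * j + i * t \<in> I"
    using i j I_mult_closed I_add_closed by blast
  ultimately have st: "s * t = 0" and "(s + i) * j + i * t = 0"
    using split_eq_0 s t S_closed(2) by blast+
  then have "(s + i) * (- j) = i * t"
    by (metis add_eq_0_iff minus_mult_right)
  moreover have "(s + t) + (i + j) \<in> areg UNIV"
    using b_reg b by (simp add: ac_simps)
  then have "s + t \<in> areg S"
    using areg_UNIV_split_iff S_closed(1)[OF s t] I_add_closed(1)[OF i j] by blast
  ultimately show "\<exists>t\<in>S. \<exists>j\<in>I. s * t = 0 \<and> s + t \<in> areg S \<and> (s + i) * j = i * t"
    using t j st I_mult_closed(1) by blast
next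
  assume "\<exists>t\<in>S. \<exists>j\<in>I. s * t = 0 \<and> s + t \<in> areg S \<and> (s + i) * j = i * t"
  then obtain t j where t: "t \<in> S" and j: "j \<in> I" and st: "s * t = 0"
    and st_reg: "s + t \<in> areg S" and e: "(s + i) * j = i * t" by blast
  have "(s + i) * (t - j) = 0"
    using st e by (simp add: algebra_simps)
  moreover have "(s + t) + (i - j) \<in> areg UNIV"
    using st_reg areg_UNIV_split_iff S_closed(1)[OF s t] I_add_closed(2)[OF i j] by blast
  then have "(s + i) + (t - j) \<in> areg UNIV"
    by (simp add: algebra_simps)
  ultimately show "\<exists>b. (s + i) * b = 0 \<and> (s + i) + b \<in> areg UNIV" by blast
qed

lemma roughly_complemented_UNIV_iff:
  "roughly_complemented (UNIV :: 'a set) \<longleftrightarrow>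
     (\<forall>s\<in>S. \<forall>i\<in>I. \<exists>t\<in>S. \<exists>j\<in>I. s * t = 0 \<and> s + t \<in> areg S \<and> (s + i) * j = i * t)"
proof -
  have "roughly_complemented (UNIV :: 'a set) \<longleftrightarrow>
      (\<forall>s\<in>S. \<forall>i\<in>I. \<exists>b. (s + i) * b = 0 \<and> (s + i) + b \<in> areg UNIV)"
    unfolding roughly_complemented_def ball_UNIV bex_UNIV
    by (rule all_split_iff)
  also have "\<dots> \<longleftrightarrow>
      (\<forall>s\<in>S. \<forall>i\<in>I. \<exists>t\<in>S. \<exists>j\<in>I. s * t = 0 \<and> s + t \<in> areg S \<and> (s + i) * j = i * t)"
    by (simp add: complement_split_iff)
  finally show ?thesis .
qed

lemma roughly_complemented_subring:
  assumes "roughly_complemented (UNIV :: 'a set)"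
  shows "roughly_complemented S"
  unfolding roughly_complemented_def
proof
  fix s assume "s \<in> S"
  moreover have "0 \<in> I" using ideal by (simp add: is_ideal_def)
  ultimately obtain t where "t \<in> S" "s * t = 0" "s + t \<in> areg S"
    using assms unfolding roughly_complemented_UNIV_iff by blast
  then show "\<exists>t\<in>S. s * t = 0 \<and> s + t \<in> areg S" by blast
qed

end

theorem mainTheorem17:
  fixes S I :: "'a::comm_ring_1 set"
  assumes "is_subring S"
    and "is_ideal I" and "is_nil I"
    and "\<forall>x. \<exists>s\<in>S. \<exists>i\<in>I. x = s + i"
    and "S \<inter> I = {0}"
  shows "(roughly_complemented (UNIV :: 'a set) \<longleftrightarrow>
           (\<forall>s\<in>S. \<forall>i\<in>I. \<exists>t\<in>S. \<exists>j\<in>I.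
              s * t = 0 \<and> s + t \<in> areg S \<and> (s + i) * j = i * t))
       \<and> (roughly_complemented (UNIV :: 'a set) \<longrightarrow> roughly_complemented S)"
proof -
  interpret nil_split S I using assms by unfold_locales
  show ?thesis using roughly_complemented_UNIV_iff roughly_complemented_subring by blast
qed

end
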